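(* Let $G$, $z$, $g_1,\dots,g_{2r}$, $S=\{g_1,\dots,g_{2r}\}$ and $\Gamma=\mathrm{Cay}(G,S)$ be as in the context. Then $\Gamma$ is $2$-arc-transitive; more precisely, the group $\hat G\rtimes\tilde S_{2r}\le\mathrm{Aut}(\Gamma)$ acts transitively on the $2$-arcs of $\Gamma$, where $\tilde S_{2r}=\{\tilde\sigma:\sigma\in S_{2r}\}$ is the group of automorphisms of $G$ with $g_i^{\tilde\sigma}=g_{i^\sigma}$ and $z^{\tilde\sigma}=z$, which fixes the vertex $1$ and acts on $S$ as the full symmetric group.
   Context: Let $r\ge1$ and $G$ an extraspecial $2$-group of order $2^{2r+1}$ (i.e. $|Z(G)|=2$, $G/Z(G)\cong\mathbb{Z}_2^{2r}$), $Z=Z(G)=\langle z\rangle$ identified with $\mathbb{F}_2$, and $G/Z$ equipped with the quadratic form $Q(Zx)=x^2$ and bilinear form $B(Zx,Zy)=[x,y]$. Assume $\{Zg_1,\dots,Zg_{2r}\}$ is a symmetric basis of $G/Z$ ($Q(Zg_i)=0$, $B(Zg_i,Zg_j)=1$ for $i\ne j$), so $g_i^2=1$ and $[g_i,g_j]=z$ for $i\neq j$. $\mathrm{Cay}(G,S)$ has vertex set $G$ and edges $\{x,sx\}$, $x\in G$, $s\in S$; $\hat G$ is the group of right multiplications $x\mapsto xg$. A $2$-arc is a triple $(u,v,w)$ with $u\sim v\sim w$ and $u\ne w$. *)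

theory Defs
  imports "HOL-Algebra.Algebra" "HOL-Combinatorics.Permutations"
begin

definition grp_center :: "('a, 'b) monoid_scheme \<Rightarrow> 'a set" where
  "grp_center G = {x \<in> carrier G. \<forall>y \<in> carrier G. x \<otimes>\<^bsub>G\<^esub> y = y \<otimes>\<^bsub>G\<^esub> x}"

definition grp_comm :: "('a, 'b) monoid_scheme \<Rightarrow> 'a \<Rightarrow> 'a \<Rightarrow> 'a" where
  "grp_comm G x y = inv\<^bsub>G\<^esub> x \<otimes>\<^bsub>G\<^esub> inv\<^bsub>G\<^esub> y \<otimes>\<^bsub>G\<^esub> x \<otimes>\<^bsub>G\<^esub> y"

definition cay_adj :: "('a, 'b) monoid_scheme \<Rightarrow> 'a set \<Rightarrow> 'a \<Rightarrow> 'a \<Rightarrow> bool" where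
  "cay_adj G S x y \<longleftrightarrow> x \<in> carrier G \<and> y \<in> carrier G \<and>
     (\<exists>s\<in>S. y = s \<otimes>\<^bsub>G\<^esub> x \<or> x = s \<otimes>\<^bsub>G\<^esub> y)"

definition two_arc :: "('a, 'b) monoid_scheme \<Rightarrow> 'a set \<Rightarrow> 'a \<Rightarrow> 'a \<Rightarrow> 'a \<Rightarrow> bool" where
  "two_arc G S u v w \<longleftrightarrow> cay_adj G S u v \<and> cay_adj G S v w \<and> u \<noteq> w"

definition cay_aut :: "('a, 'b) monoid_scheme \<Rightarrow> 'a set \<Rightarrow> ('a \<Rightarrow> 'a) \<Rightarrow> bool" where
  "cay_aut G S f \<longleftrightarrow> bij_betw f (carrier G) (carrier G) \<and>
     (\<forall>x\<in>carrier G. \<forall>y\<in>carrier G. cay_adj G S x y \<longleftrightarrow> cay_adj G S (f x) (f y))"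

end

theory Submission
  imports Defs
begin

text \<open>
  Every commutator of \<open>G\<close> lies in \<open>{1, z}\<close>, so whether two elements commute is a
  bilinear condition and the generators \<open>g\<^sub>i\<close> pairwise anticommute. It suffices to lift
  transpositions of the \<open>g\<^sub>i\<close> to automorphisms: with \<open>t = g\<^sub>a g\<^sub>b\<close> (so \<open>t\<^sup>2 = z\<close>),
  the map fixing the centraliser of \<open>t\<close> and sending the other \<open>x\<close> to \<open>x t\<close> is an
  automorphism lifting the reflection of \<open>G/Z\<close> in \<open>Z t\<close>; it sends \<open>g\<^sub>a \<mapsto> g\<^sub>b\<close> and
  \<open>g\<^sub>b \<mapsto> g\<^sub>a z\<close>, and conjugation by the product of the generators other than \<open>g\<^sub>a\<close>
  removes the stray \<open>z\<close> because \<open>2r\<close> is even. As the \<open>g\<^sub>i\<close> are involutions, a 2-arc is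
  \<open>(u, g\<^sub>i u, g\<^sub>j g\<^sub>i u)\<close> with \<open>i \<noteq> j\<close>; the automorphism lifting a permutation with
  \<open>i \<mapsto> i'\<close>, \<open>j \<mapsto> j'\<close>, followed by a right translation, maps it onto any other 2-arc
  and preserves the Cayley graph since it permutes \<open>S\<close>.
\<close>

lemma (in group) mult_eq_mult_swap_grp_comm:
  assumes "x \<in> carrier G" "y \<in> carrier G"
  shows "x \<otimes> y = y \<otimes> x \<otimes> grp_comm G x y"
proof -
  have cancel: "a \<otimes> b \<otimes> inv b = a" if "a \<in> carrier G" "b \<in> carrier G" for a b
    using that by (simp add: m_assoc)
  show ?thesis
    using assms by (simp add: grp_comm_def m_assoc[symmetric] cancel)
qed

lemma (in group) grp_comm_eq_one_iff:
  assumes x: "x \<in> carrier G" and y: "y \<in> carrier G"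
  shows "grp_comm G x y = \<one> \<longleftrightarrow> x \<otimes> y = y \<otimes> x"
proof -
  have "grp_comm G x y \<in> carrier G"
    using x y by (simp add: grp_comm_def)
  then show ?thesis
    using mult_eq_mult_swap_grp_comm[OF x y] x y by (auto simp: l_cancel_one)
qed

lemma (in group) grp_comm_eq_inv_if_mult_swap:
  assumes x: "x \<in> carrier G" and y: "y \<in> carrier G" and d: "d \<in> carrier G"
    and yx: "y \<otimes> x = x \<otimes> y \<otimes> d"
  shows "grp_comm G x y = inv d"
proof -
  have "x \<otimes> y \<otimes> (d \<otimes> grp_comm G x y) = x \<otimes> y"
    using x y d mult_eq_mult_swap_grp_comm[OF x y] unfolding yx
    by (simp add: grp_comm_def m_assoc)
  moreover have c: "grp_comm G x y \<in> carrier G"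
    using x y by (simp add: grp_comm_def)
  ultimately have dc: "d \<otimes> grp_comm G x y = \<one>"
    using x y d by simp
  show ?thesis
    using inv_equality[OF inv_comm[OF dc d c] d c] by simp
qed

lemma (in group) inv_eq_cube:
  assumes w: "w \<in> carrier G" and "w \<otimes> w \<otimes> (w \<otimes> w) = \<one>"
  shows "inv w = w \<otimes> (w \<otimes> w)"
proof (rule inv_equality)
  show "w \<otimes> (w \<otimes> w) \<otimes> w = \<one>"
    using assms by (simp add: m_assoc)
qed (use w in simp_all)

lemma (in group) grp_comm_mem_if_squares_mem:
  assumes z: "z \<in> carrier G" "\<And>x. x \<in> carrier G \<Longrightarrow> z \<otimes> x = x \<otimes> z" "z \<otimes> z = \<one>"
    and squares: "\<And>x. x \<in> carrier G \<Longrightarrow> x \<otimes> x \<in> {\<one>, z}"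
    and x: "x \<in> carrier G" and y: "y \<in> carrier G"
  shows "grp_comm G x y \<in> {\<one>, z}"
proof -
  let ?C = "{\<one>, z}"
  have C_closed: "c \<in> carrier G" and C_inv: "c \<otimes> c = \<one>" if "c \<in> ?C" for c
    using that z(1,3) by auto
  have C_central: "c \<otimes> w = w \<otimes> c" if "c \<in> ?C" "w \<in> carrier G" for c w
    using that z(2)[OF that(2)] by auto
  have C_left_commute: "c \<otimes> (w \<otimes> v) = w \<otimes> (c \<otimes> v)"
    if c: "c \<in> ?C" and w: "w \<in> carrier G" and v: "v \<in> carrier G" for c w v
    using C_central[OF c w] C_closed[OF c] w v by (metis m_assoc)
  have inv_eq: "inv w = w \<otimes> (w \<otimes> w)" if w: "w \<in> carrier G" for w
    using inv_eq_cube[OF w C_inv[OF squares[OF w]]] .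
  define e ex ey where "e = x \<otimes> y \<otimes> (x \<otimes> y)" and "ex = x \<otimes> x" and "ey = y \<otimes> y"
  have C: "e \<in> ?C" "ex \<in> ?C" "ey \<in> ?C"
    using squares x y by (auto simp: e_def ex_def ey_def)
  have "y \<otimes> x = inv x \<otimes> (e \<otimes> inv y)"
    using x y by (simp add: e_def m_assoc) (simp add: m_assoc[symmetric])
  also have "\<dots> = inv x \<otimes> (inv y \<otimes> e)"
    using C_central[OF C(1)] y by simp
  also have "\<dots> = x \<otimes> (ex \<otimes> (y \<otimes> (ey \<otimes> e)))"
    using inv_eq x y C_closed[OF C(1)] by (simp add: ex_def ey_def m_assoc)
  also have "\<dots> = x \<otimes> y \<otimes> (ex \<otimes> ey \<otimes> e)"
    using C_left_commute[OF C(2) y] x y C_closed[OF C(2)] C_closed[OF C(3)] C_closed[OF C(1)]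
    by (simp add: m_assoc)
  finally have "grp_comm G x y = inv (ex \<otimes> ey \<otimes> e)"
    using x y C_closed C by (intro grp_comm_eq_inv_if_mult_swap) auto
  moreover have "ex \<otimes> ey \<otimes> e \<in> ?C"
    using C z(1,3) by auto
  ultimately show ?thesis
    using inv_equality[OF C_inv C_closed C_closed] by auto
qed

lemma (in group) cay_adj_iff_involutions:
  assumes "\<And>s. s \<in> S \<Longrightarrow> s \<in> carrier G \<and> s \<otimes> s = \<one>"
  shows "cay_adj G S x y \<longleftrightarrow> x \<in> carrier G \<and> y \<in> carrier G \<and> (\<exists>s\<in>S. y = s \<otimes> x)"
proof -
  have "y = s \<otimes> x \<longleftrightarrow> x = s \<otimes> y" if "s \<in> S" "x \<in> carrier G" "y \<in> carrier G" for s
    using assms[OF that(1)] that(2,3) by (auto simp: m_assoc[symmetric])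
  then show ?thesis
    unfolding cay_adj_def by blast
qed

lemma (in group) cay_aut_iso_translation:
  assumes \<phi>: "\<phi> \<in> iso G G" and S: "S \<subseteq> carrier G" "\<phi> ` S = S" and h: "h \<in> carrier G"
  shows "cay_aut G S (\<lambda>x. \<phi> x \<otimes> h)"
proof -
  let ?f = "\<lambda>x. \<phi> x \<otimes> h"
  have \<phi>_closed: "\<phi> x \<in> carrier G" if "x \<in> carrier G" for x
    using \<phi> that by (auto simp: iso_def hom_def)
  have \<phi>_mult: "\<phi> (x \<otimes> y) = \<phi> x \<otimes> \<phi> y" if "x \<in> carrier G" "y \<in> carrier G" for x y
    using \<phi> that by (auto simp: iso_def hom_def)
  have \<phi>_bij: "bij_betw \<phi> (carrier G) (carrier G)"
    using \<phi> by (simp add: iso_def)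
  have f_inj: "inj_on ?f (carrier G)"
    using \<phi>_bij \<phi>_closed h by (auto simp: bij_betw_def inj_on_def)
  have f_image: "?f ` carrier G = carrier G"
  proof (intro subset_antisym subsetI)
    fix y assume y: "y \<in> carrier G"
    then obtain x where x: "x \<in> carrier G" "\<phi> x = y \<otimes> inv h"
      using \<phi>_bij h by (metis bij_betw_iff_bijections inv_closed m_closed)
    then show "y \<in> ?f ` carrier G"
      using y h by (intro image_eqI[of _ _ x]) (simp_all add: m_assoc)
  qed (use \<phi>_closed h in auto)
  have shift: "?f y = \<phi> s \<otimes> ?f x \<longleftrightarrow> y = s \<otimes> x"
    if "s \<in> carrier G" "x \<in> carrier G" "y \<in> carrier G" for s x y
  proof -
    have "\<phi> s \<otimes> ?f x = ?f (s \<otimes> x)"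
      using that \<phi>_closed h by (simp add: \<phi>_mult m_assoc)
    then show ?thesis
      using f_inj that by (auto dest: inj_onD)
  qed
  have "cay_adj G S x y \<longleftrightarrow> cay_adj G S (?f x) (?f y)"
    if x: "x \<in> carrier G" and y: "y \<in> carrier G" for x y
  proof -
    have "(\<exists>s'\<in>S. ?f y = s' \<otimes> ?f x \<or> ?f x = s' \<otimes> ?f y)
        \<longleftrightarrow> (\<exists>s\<in>S. ?f y = \<phi> s \<otimes> ?f x \<or> ?f x = \<phi> s \<otimes> ?f y)"
      by (subst (1) S(2)[symmetric]) blast
    also have "\<dots> \<longleftrightarrow> (\<exists>s\<in>S. y = s \<otimes> x \<or> x = s \<otimes> y)"
      using shift S(1) x y by blast
    finally show ?thesis
      using x y \<phi>_closed h by (simp add: cay_adj_def)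
  qed
  then show ?thesis
    using f_inj f_image by (simp add: cay_aut_def bij_betw_def)
qed

lemma permutes_exists_map_pair:
  assumes "i \<in> A" "j \<in> A" "i \<noteq> j" "i' \<in> A" "j' \<in> A" "i' \<noteq> j'"
  shows "\<exists>\<sigma>. \<sigma> permutes A \<and> \<sigma> i = i' \<and> \<sigma> j = j'"
proof -
  define k where "k = transpose i i' j"
  define \<sigma> where "\<sigma> = transpose k j' \<circ> transpose i i'"
  have "k \<in> A" "k \<noteq> i'"
    using assms by (auto simp: k_def transpose_def)
  then have "\<sigma> permutes A" "\<sigma> i = i'" "\<sigma> j = j'"
    using assms by (auto simp: \<sigma>_def k_def transpose_def intro!: permutes_compose permutes_swap_id)
  then show ?thesis
    by blast
qed

lemma (in monoid) foldr_mult_closed: "set xs \<subseteq> carrier G \<Longrightarrow> foldr (\<otimes>) xs \<one> \<in> carrier G"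
  by (induction xs) auto

lemma (in group) inner_iso:
  assumes u: "u \<in> carrier G"
  shows "(\<lambda>x. inv u \<otimes> x \<otimes> u) \<in> iso G G"
proof -
  have cancel: "u \<otimes> (inv u \<otimes> w) = w" "inv u \<otimes> (u \<otimes> w) = w" if "w \<in> carrier G" for w
    using u that by (simp_all add: m_assoc[symmetric])
  have "inv u \<otimes> (x \<otimes> y) \<otimes> u = inv u \<otimes> x \<otimes> u \<otimes> (inv u \<otimes> y \<otimes> u)"
    if "x \<in> carrier G" "y \<in> carrier G" for x y
    using u that by (simp add: m_assoc cancel)
  moreover have "y \<in> (\<lambda>x. inv u \<otimes> x \<otimes> u) ` carrier G" if "y \<in> carrier G" for y
  proof
    show "y = inv u \<otimes> (u \<otimes> y \<otimes> inv u) \<otimes> u"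
      using u that by (simp add: m_assoc cancel)
  qed (use u that in simp)
  ultimately show ?thesis
    using u unfolding iso_iff hom_def by (auto simp: inj_on_def)
qed

locale commutator_z_group = group G for G (structure) +
  fixes z :: 'a
  assumes z_closed: "z \<in> carrier G"
    and z_neq_one: "z \<noteq> \<one>"
    and z_central: "x \<in> carrier G \<Longrightarrow> z \<otimes> x = x \<otimes> z"
    and z_square: "z \<otimes> z = \<one>"
    and grp_comm_cases: "x \<in> carrier G \<Longrightarrow> y \<in> carrier G \<Longrightarrow> grp_comm G x y \<in> {\<one>, z}"
begin

definition zsign :: "bool \<Rightarrow> 'a" where
  "zsign b = (if b then z else \<one>)"

lemma zsign_closed [simp]: "zsign b \<in> carrier G"
  using z_closed by (simp add: zsign_def)

lemma zsign_central: "x \<in> carrier G \<Longrightarrow> zsign b \<otimes> x = x \<otimes> zsign b"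
  using z_central[of x] by (simp add: zsign_def)

lemma zsign_mult: "zsign a \<otimes> zsign b = zsign (a \<noteq> b)"
  using z_closed z_square by (simp add: zsign_def)

lemma mult_zsign_eq_self_iff: "x \<in> carrier G \<Longrightarrow> x \<otimes> zsign b = x \<longleftrightarrow> \<not> b"
  using z_closed z_neq_one by (simp add: zsign_def)

lemma mult_eq_mult_swap_zsign:
  assumes "x \<in> carrier G" "y \<in> carrier G"
  shows "x \<otimes> y = y \<otimes> x \<otimes> zsign (x \<otimes> y \<noteq> y \<otimes> x)"
proof (cases "x \<otimes> y = y \<otimes> x")
  case False
  then have "grp_comm G x y = z"
    using grp_comm_cases[OF assms] grp_comm_eq_one_iff[OF assms] by auto
  then show ?thesis
    using mult_eq_mult_swap_grp_comm[OF assms] False by (simp add: zsign_def)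
qed (use assms in \<open>simp add: zsign_def\<close>)

lemma mult_eq_mult_swap_z:
  "x \<in> carrier G \<Longrightarrow> y \<in> carrier G \<Longrightarrow> x \<otimes> y \<noteq> y \<otimes> x \<Longrightarrow> x \<otimes> y = y \<otimes> x \<otimes> z"
  using mult_eq_mult_swap_zsign[of x y] by (simp add: zsign_def)

lemma commute_mult_left:
  assumes t: "t \<in> carrier G" and x: "x \<in> carrier G" and y: "y \<in> carrier G"
  shows "x \<otimes> y \<otimes> t = t \<otimes> (x \<otimes> y) \<longleftrightarrow> (x \<otimes> t = t \<otimes> x \<longleftrightarrow> y \<otimes> t = t \<otimes> y)"
proof -
  define A B where "A = (x \<otimes> t \<noteq> t \<otimes> x)" and "B = (y \<otimes> t \<noteq> t \<otimes> y)"
  have "x \<otimes> y \<otimes> t = x \<otimes> (t \<otimes> y \<otimes> zsign B)"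
    using mult_eq_mult_swap_zsign[OF y t] x y t by (simp add: B_def m_assoc)
  also have "\<dots> = t \<otimes> x \<otimes> zsign A \<otimes> y \<otimes> zsign B"
    using mult_eq_mult_swap_zsign[OF x t] x y t by (simp add: A_def m_assoc[symmetric])
  also have "\<dots> = t \<otimes> (x \<otimes> y) \<otimes> (zsign A \<otimes> zsign B)"
    using zsign_central[OF y, of A] x y t by (simp add: m_assoc)
  finally have "x \<otimes> y \<otimes> t = t \<otimes> (x \<otimes> y) \<otimes> zsign (A \<noteq> B)"
    by (simp add: zsign_mult)
  then show ?thesis
    using mult_zsign_eq_self_iff[of "t \<otimes> (x \<otimes> y)" "A \<noteq> B"] x y t
    unfolding A_def B_def by auto
qed

lemma commute_foldr_mult:
  assumes "set xs \<subseteq> carrier G" and t: "t \<in> carrier G"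
  shows "foldr (\<otimes>) xs \<one> \<otimes> t = t \<otimes> foldr (\<otimes>) xs \<one>
    \<longleftrightarrow> even (length (filter (\<lambda>x. x \<otimes> t \<noteq> t \<otimes> x) xs))"
  using assms(1)
proof (induction xs)
  case (Cons x xs)
  then show ?case
    using commute_mult_left[OF t, of x "foldr (\<otimes>) xs \<one>"] foldr_mult_closed[of xs] by auto
qed (use t in simp)

lemma inner_eq_mult_zsign:
  assumes u: "u \<in> carrier G" and x: "x \<in> carrier G"
  shows "inv u \<otimes> x \<otimes> u = x \<otimes> zsign (x \<otimes> u \<noteq> u \<otimes> x)"
proof -
  have "inv u \<otimes> x \<otimes> u = inv u \<otimes> (x \<otimes> u)"
    using u x by (simp add: m_assoc)
  also have "\<dots> = inv u \<otimes> (u \<otimes> x \<otimes> zsign (x \<otimes> u \<noteq> u \<otimes> x))"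
    by (subst mult_eq_mult_swap_zsign[OF x u]) (rule refl)
  finally show ?thesis
    using u x by (simp add: m_assoc[symmetric])
qed

lemma iso_fixes_z:
  assumes \<phi>: "\<phi> \<in> iso G G" and x: "x \<in> carrier G" and y: "y \<in> carrier G"
    and noncomm: "x \<otimes> y \<noteq> y \<otimes> x"
  shows "\<phi> z = z"
proof -
  have \<phi>_closed: "\<phi> w \<in> carrier G" if "w \<in> carrier G" for w
    using \<phi> that by (auto simp: iso_def hom_def)
  have \<phi>_mult: "\<phi> (v \<otimes> w) = \<phi> v \<otimes> \<phi> w" if "v \<in> carrier G" "w \<in> carrier G" for v w
    using \<phi> that by (auto simp: iso_def hom_def)
  have "inj_on \<phi> (carrier G)"
    using \<phi> by (simp add: iso_iff)
  then have "\<phi> x \<otimes> \<phi> y \<noteq> \<phi> y \<otimes> \<phi> x"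
    using noncomm x y by (auto simp: \<phi>_mult[symmetric] dest: inj_onD)
  then have "\<phi> y \<otimes> \<phi> x \<otimes> z = \<phi> x \<otimes> \<phi> y"
    using mult_eq_mult_swap_z \<phi>_closed x y by metis
  also have "\<dots> = \<phi> (y \<otimes> x \<otimes> z)"
    unfolding mult_eq_mult_swap_z[OF x y noncomm, symmetric] using x y by (simp add: \<phi>_mult)
  also have "\<dots> = \<phi> y \<otimes> \<phi> x \<otimes> \<phi> z"
    using x y z_closed by (simp add: \<phi>_mult)
  finally show ?thesis
    using \<phi>_closed x y z_closed by simp
qed

lemma commute_mult_right:
  assumes "t \<in> carrier G" "x \<in> carrier G" "y \<in> carrier G"
  shows "t \<otimes> (x \<otimes> y) = x \<otimes> y \<otimes> t \<longleftrightarrow> (t \<otimes> x = x \<otimes> t \<longleftrightarrow> t \<otimes> y = y \<otimes> t)"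
  using commute_mult_left[OF assms] by (metis (no_types))

text \<open>The lift to \<open>G\<close> of the orthogonal reflection (a symplectic transvection) of \<open>G/Z\<close>
  in the vector \<open>Z t\<close>.\<close>

definition transvection :: "'a \<Rightarrow> 'a \<Rightarrow> 'a" where
  "transvection t x = (if x \<otimes> t = t \<otimes> x then x else x \<otimes> t)"

lemma transvection_closed:
  "t \<in> carrier G \<Longrightarrow> x \<in> carrier G \<Longrightarrow> transvection t x \<in> carrier G"
  by (simp add: transvection_def)

lemma transvection_mult:
  assumes t: "t \<in> carrier G" "t \<otimes> t = z" and x: "x \<in> carrier G" and y: "y \<in> carrier G"
  shows "transvection t (x \<otimes> y) = transvection t x \<otimes> transvection t y"
proof (cases "x \<otimes> t = t \<otimes> x"; cases "y \<otimes> t = t \<otimes> y")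
  assume nx: "x \<otimes> t \<noteq> t \<otimes> x" and ny: "y \<otimes> t \<noteq> t \<otimes> y"
  have "x \<otimes> t \<otimes> (y \<otimes> t) = x \<otimes> (t \<otimes> t) \<otimes> y \<otimes> z"
    using mult_eq_mult_swap_z[OF y t(1) ny] t(1) x y z_closed by (simp add: m_assoc)
  also have "\<dots> = x \<otimes> y \<otimes> (z \<otimes> z)"
    using t x y z_closed z_central[OF y] by (simp add: m_assoc)
  also have "\<dots> = x \<otimes> y"
    using x y z_square by simp
  finally show ?thesis
    using nx ny commute_mult_left[OF t(1) x y] by (simp add: transvection_def)
qed (use commute_mult_left[OF t(1) x y] t x y in \<open>simp_all add: transvection_def m_assoc\<close>)

lemma transvection_bij:
  assumes t: "t \<in> carrier G"
  shows "bij_betw (transvection t) (carrier G) (carrier G)"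
proof -
  have commute_mult_t: "x \<otimes> t \<otimes> t = t \<otimes> (x \<otimes> t) \<longleftrightarrow> x \<otimes> t = t \<otimes> x" if "x \<in> carrier G" for x
    using t that by (metis m_assoc m_closed r_cancel)
  have "inj_on (transvection t) (carrier G)"
    by (intro inj_onI) (auto simp: transvection_def commute_mult_t t split: if_splits)
  moreover have "y \<in> transvection t ` carrier G" if y: "y \<in> carrier G" for y
  proof (cases "y \<otimes> t = t \<otimes> y")
    case True
    then show ?thesis
      using y by (intro image_eqI[of y _ y]) (simp_all add: transvection_def)
  next
    case False
    have "y \<otimes> inv t \<otimes> t = y"
      using y t by (simp add: m_assoc)
    then show ?thesis
      using y t False commute_mult_t[of "y \<otimes> inv t"]
      by (intro image_eqI[of y _ "y \<otimes> inv t"]) (simp_all add: transvection_def)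
  qed
  ultimately show ?thesis
    using transvection_closed[OF t] by (auto simp: bij_betw_def)
qed

lemma transvection_iso:
  "t \<in> carrier G \<Longrightarrow> t \<otimes> t = z \<Longrightarrow> transvection t \<in> iso G G"
  by (simp add: iso_def hom_def transvection_closed transvection_mult transvection_bij)

end

lemma length_filter_upt_remove_two:
  assumes "a \<in> {1..n}" "m \<in> {1..n}"
  shows "length (filter (\<lambda>l. l \<noteq> m) (filter (\<lambda>l. l \<noteq> a) [1..<n+1]))
    = (if m = a then n - 1 else n - 2)"
proof -
  have "length (filter (\<lambda>l. l \<noteq> m) (filter (\<lambda>l. l \<noteq> a) [1..<n+1]))
      = card ({l. l \<noteq> a \<and> l \<noteq> m} \<inter> set [1..<n+1])"
    by (simp add: filter_filter distinct_length_filter conj_commute)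
  also have "{l. l \<noteq> a \<and> l \<noteq> m} \<inter> set [1..<n+1] = {1..n} - {a} - {m}"
    by auto
  finally show ?thesis
    using assms by (auto simp: card_Diff_singleton)
qed

locale symmetric_basis = commutator_z_group +
  fixes g :: "nat \<Rightarrow> 'a" and n :: nat
  assumes g_closed: "i \<in> {1..n} \<Longrightarrow> g i \<in> carrier G"
    and g_square: "i \<in> {1..n} \<Longrightarrow> g i \<otimes> g i = \<one>"
    and g_noncommute: "i \<in> {1..n} \<Longrightarrow> j \<in> {1..n} \<Longrightarrow> i \<noteq> j \<Longrightarrow> g i \<otimes> g j \<noteq> g j \<otimes> g i"
    and n_even: "even n"
begin

lemma g_commute_iff: "k \<in> {1..n} \<Longrightarrow> l \<in> {1..n} \<Longrightarrow> g k \<otimes> g l = g l \<otimes> g k \<longleftrightarrow> k = l"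
  using g_noncommute by blast

lemma inner_prod_other_generators:
  assumes a: "a \<in> {1..n}" and m: "m \<in> {1..n}"
  defines "u \<equiv> foldr (\<otimes>) (map g (filter (\<lambda>l. l \<noteq> a) [1..<n+1])) \<one>"
  shows "inv u \<otimes> g m \<otimes> u = (if m = a then g m \<otimes> z else g m)"
proof -
  let ?others = "filter (\<lambda>l. l \<noteq> a) [1..<n+1]"
  have others: "set (map g ?others) \<subseteq> carrier G"
    using g_closed by auto
  have u: "u \<in> carrier G"
    unfolding u_def using others by (rule foldr_mult_closed)
  have "filter (\<lambda>x. x \<otimes> g m \<noteq> g m \<otimes> x) (map g ?others) = map g (filter (\<lambda>l. l \<noteq> m) ?others)"
    unfolding filter_map
  proof (intro arg_cong[where f = "map g"] filter_cong refl)
    fix l assume "l \<in> set ?others"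
    then have "l \<in> {1..n}"
      by auto
    then show "((\<lambda>x. x \<otimes> g m \<noteq> g m \<otimes> x) \<circ> g) l \<longleftrightarrow> l \<noteq> m"
      using g_commute_iff[OF _ m] by simp
  qed
  then have "u \<otimes> g m = g m \<otimes> u \<longleftrightarrow> even (length (filter (\<lambda>l. l \<noteq> m) ?others))"
    unfolding u_def using commute_foldr_mult[OF others g_closed[OF m]] by simp
  also have "\<dots> \<longleftrightarrow> even (if m = a then n - 1 else n - 2)"
    by (simp only: length_filter_upt_remove_two[OF a m])
  also have "\<dots> \<longleftrightarrow> m \<noteq> a"
    using n_even a m by (cases "m = a") auto
  finally have "g m \<otimes> u \<noteq> u \<otimes> g m \<longleftrightarrow> m = a"
    by auto
  then show ?thesis
    using inner_eq_mult_zsign[OF u g_closed[OF m]] g_closed[OF m] by (simp add: zsign_def)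
qed

lemma g_mult_square:
  assumes a: "a \<in> {1..n}" and b: "b \<in> {1..n}" and ab: "a \<noteq> b"
  shows "g a \<otimes> g b \<otimes> (g a \<otimes> g b) = z"
proof -
  have "g a \<otimes> g b \<otimes> (g a \<otimes> g b) = g a \<otimes> (g b \<otimes> g a) \<otimes> g b"
    using a b by (simp add: g_closed m_assoc)
  also have "\<dots> = g a \<otimes> g a \<otimes> (g b \<otimes> (z \<otimes> g b))"
    using mult_eq_mult_swap_z[OF g_closed[OF b] g_closed[OF a] g_noncommute[OF b a ab[symmetric]]]
      a b z_closed by (simp add: g_closed m_assoc)
  also have "\<dots> = z"
    using a b z_closed by (simp add: g_closed g_square z_central m_assoc[symmetric])
  finally show ?thesis .
qed

lemma transvection_generator:
  assumes a: "a \<in> {1..n}" and b: "b \<in> {1..n}" and ab: "a \<noteq> b" and k: "k \<in> {1..n}"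
  shows "transvection (g a \<otimes> g b) (g k) = (if k = a then g b else if k = b then g a \<otimes> z else g k)"
proof -
  note gs = g_closed[OF a] g_closed[OF b] g_closed[OF k]
  have "g k \<otimes> (g a \<otimes> g b) = g a \<otimes> g b \<otimes> g k \<longleftrightarrow> k \<noteq> a \<and> k \<noteq> b"
    using commute_mult_right[OF gs(3) gs(1) gs(2)] g_commute_iff[OF k a] g_commute_iff[OF k b] ab
    by auto
  moreover have "g b \<otimes> (g a \<otimes> g b) = g a \<otimes> z"
    using g_mult_square[OF a b ab] gs g_square[OF a] z_closed
    by (metis l_one m_assoc m_closed)
  ultimately show ?thesis
    using gs g_square[OF a] by (auto simp: transvection_def m_assoc[symmetric])
qed

lemma swap_generators_iso:
  assumes a: "a \<in> {1..n}" and b: "b \<in> {1..n}" and ab: "a \<noteq> b"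
  shows "\<exists>\<phi>\<in>iso G G. \<forall>k\<in>{1..n}. \<phi> (g k) = g (transpose a b k)"
proof -
  define u where "u = foldr (\<otimes>) (map g (filter (\<lambda>l. l \<noteq> a) [1..<n+1])) \<one>"
  have u: "u \<in> carrier G"
    unfolding u_def by (rule foldr_mult_closed) (auto simp: g_closed)
  let ?inner = "\<lambda>x. inv u \<otimes> x \<otimes> u"
  have inner_g: "?inner (g k) = (if k = a then g k \<otimes> z else g k)" if "k \<in> {1..n}" for k
    using inner_prod_other_generators[OF a that] by (simp add: u_def)
  have "?inner (g a \<otimes> z) = ?inner (g a) \<otimes> ?inner z"
    using inner_iso[OF u] a z_closed by (simp add: iso_def hom_def g_closed)
  also have "\<dots> = g a"
    using inner_g[OF a] inner_eq_mult_zsign[OF u z_closed] z_central[OF u] a z_closed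
    by (simp add: zsign_def g_closed m_assoc z_square)
  finally have inner_b: "?inner (g a \<otimes> z) = g a" .
  show ?thesis
  proof (intro bexI ballI)
    show "?inner \<circ> transvection (g a \<otimes> g b) \<in> iso G G"
      using iso_set_trans[OF transvection_iso[OF _ g_mult_square[OF a b ab]] inner_iso[OF u]] a b
      by (simp add: g_closed)
    fix k assume k: "k \<in> {1..n}"
    then show "(?inner \<circ> transvection (g a \<otimes> g b)) (g k) = g (transpose a b k)"
      using transvection_generator[OF a b ab k] inner_g inner_b ab b
      by (auto simp: transpose_def)
  qed
qed

lemma permutation_generators_iso:
  assumes "p permutes {1..n}"
  shows "\<exists>\<phi>\<in>iso G G. \<forall>k\<in>{1..n}. \<phi> (g k) = g (p k)"
  using assms finite_atLeastAtMost
proof (induction p rule: permutes_induct)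
  case id
  show ?case
    using iso_set_refl by fastforce
next
  case (swap a b p)
  obtain \<phi> where \<phi>: "\<phi> \<in> iso G G" "\<forall>k\<in>{1..n}. \<phi> (g k) = g (p k)"
    using swap.IH by blast
  obtain \<tau> where \<tau>: "\<tau> \<in> iso G G" "\<forall>k\<in>{1..n}. \<tau> (g k) = g (transpose a b k)"
    using swap_generators_iso[OF swap.hyps(1-3)] by blast
  have "\<forall>k\<in>{1..n}. (\<tau> \<circ> \<phi>) (g k) = g ((transpose a b \<circ> p) k)"
    using \<phi>(2) \<tau>(2) permutes_in_image[OF swap.hyps(4)] by simp
  then show ?case
    using iso_set_trans[OF \<phi>(1) \<tau>(1)] by blast
qed

lemma cay_adj_generators:
  "cay_adj G (g ` {1..n}) x y \<longleftrightarrow> x \<in> carrier G \<and> y \<in> carrier G \<and> (\<exists>i\<in>{1..n}. y = g i \<otimes> x)"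
proof -
  have "s \<in> carrier G \<and> s \<otimes> s = \<one>" if "s \<in> g ` {1..n}" for s
    using that g_closed g_square by auto
  then show ?thesis
    using cay_adj_iff_involutions by blast
qed

lemma two_arc_generators:
  assumes "two_arc G (g ` {1..n}) u v w"
  obtains i j where "i \<in> {1..n}" "j \<in> {1..n}" "i \<noteq> j" "u \<in> carrier G" "v = g i \<otimes> u" "w = g j \<otimes> v"
proof -
  obtain i j where ij: "i \<in> {1..n}" "j \<in> {1..n}" and u: "u \<in> carrier G"
    and v: "v = g i \<otimes> u" and w: "w = g j \<otimes> v" and uw: "u \<noteq> w"
    using assms unfolding two_arc_def cay_adj_generators by blast
  have "i \<noteq> j"
  proof
    assume "i = j"
    then have "w = g i \<otimes> g i \<otimes> u"
      using ij u v w by (simp add: g_closed m_assoc)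
    then show False
      using uw u g_square[OF ij(1)] by simp
  qed
  then show thesis
    using that ij u v w by blast
qed

lemma two_arc_transitive:
  assumes "two_arc G (g ` {1..n}) u v w" and "two_arc G (g ` {1..n}) u' v' w'"
  shows "\<exists>h\<in>carrier G. \<exists>\<sigma> \<phi>. \<sigma> permutes {1..n} \<and> \<phi> \<in> iso G G \<and>
    (\<forall>i\<in>{1..n}. \<phi> (g i) = g (\<sigma> i)) \<and> cay_aut G (g ` {1..n}) (\<lambda>x. \<phi> x \<otimes> h) \<and>
    \<phi> u \<otimes> h = u' \<and> \<phi> v \<otimes> h = v' \<and> \<phi> w \<otimes> h = w'"
proof -
  obtain i j where i: "i \<in> {1..n}" and j: "j \<in> {1..n}" "i \<noteq> j" and u: "u \<in> carrier G"
    and v: "v = g i \<otimes> u" and w: "w = g j \<otimes> v"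
    using two_arc_generators[OF assms(1)] .
  obtain i' j' where i': "i' \<in> {1..n}" and j': "j' \<in> {1..n}" "i' \<noteq> j'" and u': "u' \<in> carrier G"
    and v': "v' = g i' \<otimes> u'" and w': "w' = g j' \<otimes> v'"
    using two_arc_generators[OF assms(2)] .
  obtain \<sigma> where \<sigma>: "\<sigma> permutes {1..n}" "\<sigma> i = i'" "\<sigma> j = j'"
    using permutes_exists_map_pair[OF i j i' j'] by blast
  obtain \<phi> where \<phi>: "\<phi> \<in> iso G G" "\<forall>k\<in>{1..n}. \<phi> (g k) = g (\<sigma> k)"
    using permutation_generators_iso[OF \<sigma>(1)] by blast
  have \<phi>_closed: "\<phi> x \<in> carrier G" if "x \<in> carrier G" for x
    using \<phi>(1) that by (auto simp: iso_def hom_def)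
  have \<phi>_g_mult: "\<phi> (g k \<otimes> x) = g (\<sigma> k) \<otimes> \<phi> x" if "k \<in> {1..n}" "x \<in> carrier G" for k x
    using \<phi> that by (auto simp: iso_def hom_def g_closed)
  have \<phi>_S: "\<phi> ` g ` {1..n} = g ` {1..n}"
  proof -
    have "\<phi> ` g ` {1..n} = g ` \<sigma> ` {1..n}"
      using \<phi>(2) by (force simp: image_comp)
    then show ?thesis
      using permutes_image[OF \<sigma>(1)] by simp
  qed
  define h where "h = inv (\<phi> u) \<otimes> u'"
  have h: "h \<in> carrier G" and hu: "\<phi> u \<otimes> h = u'"
    using \<phi>_closed[OF u] u' by (simp_all add: h_def m_assoc[symmetric])
  have hv: "\<phi> v \<otimes> h = v'"
    using \<phi>_g_mult[OF i u] \<phi>_closed[OF u] hu h i' \<sigma>(2) by (simp add: v v' g_closed m_assoc)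
  have "\<phi> w \<otimes> h = w'"
    using \<phi>_g_mult[OF j(1)] \<phi>_closed hv h u i j' \<sigma>(3) by (simp add: w w' v g_closed m_assoc)
  moreover have "cay_aut G (g ` {1..n}) (\<lambda>x. \<phi> x \<otimes> h)"
    using cay_aut_iso_translation[OF \<phi>(1) _ \<phi>_S h] g_closed by (simp add: image_subset_iff)
  ultimately show ?thesis
    using \<sigma>(1) \<phi> h hu hv by blast
qed

end

lemma (in group) symmetric_basis_if_squares_in_center:
  assumes z: "z \<in> carrier G" "z \<noteq> \<one>" and center: "grp_center G = {\<one>, z}"
    and squares: "\<forall>x\<in>carrier G. x \<otimes> x \<in> {\<one>, z}"
    and g_closed: "\<forall>i\<in>{1..n}. g i \<in> carrier G"
    and g_square: "\<forall>i\<in>{1..n}. g i \<otimes> g i = \<one>"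
    and g_comm: "\<forall>i\<in>{1..n}. \<forall>j\<in>{1..n}. i \<noteq> j \<longrightarrow> grp_comm G (g i) (g j) = z"
    and "even n"
  shows "symmetric_basis G z g n"
proof -
  have z_central: "z \<otimes> x = x \<otimes> z" if "x \<in> carrier G" for x
    using center that unfolding grp_center_def by auto
  have "z \<otimes> z \<noteq> z"
    using z by (metis l_cancel_one)
  then have z_square: "z \<otimes> z = \<one>"
    using squares z(1) by auto
  have g_noncommute: "g i \<otimes> g j \<noteq> g j \<otimes> g i" if "i \<in> {1..n}" "j \<in> {1..n}" "i \<noteq> j" for i j
    using g_comm that z(2) grp_comm_eq_one_iff[of "g i" "g j"] g_closed by auto
  have grp_comm_cases: "grp_comm G x y \<in> {\<one>, z}" if "x \<in> carrier G" "y \<in> carrier G" for x y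
    using grp_comm_mem_if_squares_mem[OF z(1) z_central z_square _ that] squares by blast
  show ?thesis
    using is_group z z_square z_central grp_comm_cases g_closed g_square g_noncommute \<open>even n\<close>
    by (intro symmetric_basis.intro symmetric_basis_axioms.intro commutator_z_group.intro
        commutator_z_group_axioms.intro) blast+
qed

theorem theorem4p2:
  fixes G :: "('a, 'b) monoid_scheme" and r :: nat and z :: 'a and g :: "nat \<Rightarrow> 'a"
  assumes grp: "group G"
    and fin: "finite (carrier G)"
    and r1: "r \<ge> 1"
    and ord: "card (carrier G) = 2 ^ (2 * r + 1)"
    and zG: "z \<in> carrier G" and z1: "z \<noteq> \<one>\<^bsub>G\<^esub>"
    and Z: "grp_center G = {\<one>\<^bsub>G\<^esub>, z}"
    and quot: "\<forall>x\<in>carrier G. x \<otimes>\<^bsub>G\<^esub> x \<in> {\<one>\<^bsub>G\<^esub>, z}"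
    and gG: "\<forall>i\<in>{1..2*r}. g i \<in> carrier G"
    and gsq: "\<forall>i\<in>{1..2*r}. g i \<otimes>\<^bsub>G\<^esub> g i = \<one>\<^bsub>G\<^esub>"
    and gcomm: "\<forall>i\<in>{1..2*r}. \<forall>j\<in>{1..2*r}. i \<noteq> j \<longrightarrow> grp_comm G (g i) (g j) = z"
    and span: "generate G (g ` {1..2*r}) = carrier G"
  defines "S \<equiv> g ` {1..2*r}"
  shows
    "(\<forall>\<sigma>. \<sigma> permutes {1..2*r} \<longrightarrow>
        (\<exists>\<phi>. \<phi> \<in> iso G G \<and> (\<forall>i\<in>{1..2*r}. \<phi> (g i) = g (\<sigma> i)) \<and> \<phi> z = z))
     \<and> (\<forall>u v w u' v' w'. two_arc G S u v w \<and> two_arc G S u' v' w' \<longrightarrow>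
        (\<exists>h \<in> carrier G. \<exists>\<sigma> \<phi>. \<sigma> permutes {1..2*r} \<and> \<phi> \<in> iso G G \<and>
            (\<forall>i\<in>{1..2*r}. \<phi> (g i) = g (\<sigma> i)) \<and> \<phi> z = z \<and>
            cay_aut G S (\<lambda>x. \<phi> x \<otimes>\<^bsub>G\<^esub> h) \<and>
            \<phi> u \<otimes>\<^bsub>G\<^esub> h = u' \<and> \<phi> v \<otimes>\<^bsub>G\<^esub> h = v' \<and> \<phi> w \<otimes>\<^bsub>G\<^esub> h = w'))"
proof -
  interpret symmetric_basis G z g "2*r"
    using group.symmetric_basis_if_squares_in_center[OF grp zG z1 Z quot gG gsq gcomm] by simp
  have one: "1 \<in> {1..2*r}" and two: "2 \<in> {1..2*r}"
    using r1 by auto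
  have fixes_z: "\<phi> z = z" if "\<phi> \<in> iso G G" for \<phi>
    using iso_fixes_z[OF that g_closed[OF one] g_closed[OF two] g_noncommute[OF one two]] by simp
  show ?thesis
    unfolding S_def
  proof (intro conjI allI impI)
    fix \<sigma> :: "nat \<Rightarrow> nat"
    assume "\<sigma> permutes {1..2*r}"
    then show "\<exists>\<phi>. \<phi> \<in> iso G G \<and> (\<forall>i\<in>{1..2*r}. \<phi> (g i) = g (\<sigma> i)) \<and> \<phi> z = z"
      using permutation_generators_iso fixes_z by blast
  next
    fix u v w u' v' w'
    assume "two_arc G (g ` {1..2*r}) u v w \<and> two_arc G (g ` {1..2*r}) u' v' w'"
    then show "\<exists>h\<in>carrier G. \<exists>\<sigma> \<phi>. \<sigma> permutes {1..2*r} \<and> \<phi> \<in> iso G G \<and>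
        (\<forall>i\<in>{1..2*r}. \<phi> (g i) = g (\<sigma> i)) \<and> \<phi> z = z \<and>
        cay_aut G (g ` {1..2*r}) (\<lambda>x. \<phi> x \<otimes>\<^bsub>G\<^esub> h) \<and>
        \<phi> u \<otimes>\<^bsub>G\<^esub> h = u' \<and> \<phi> v \<otimes>\<^bsub>G\<^esub> h = v' \<and> \<phi> w \<otimes>\<^bsub>G\<^esub> h = w'"
      using two_arc_transitive fixes_z by blast
  qed
qed

end
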